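(* There exists a random coverage collaborative learning problem with strategy space $\Theta=\mathbb{R}_+^k$ whose set of envy-free equilibria is non-convex.
   Context: Random coverage: finite domain $\mathcal{X}$; agent $i$ has a distribution $(q_{ix})_{x\in\mathcal{X}}$ on $\mathcal{X}$. For integer sample counts ${\bf m}$, $U_i({\bf m})=1-\frac12\sum_{x\in\mathcal{X}}q_{ix}\prod_{j=1}^k(1-q_{jx})^{m_j}$; for real ${\boldsymbol\theta}\in\mathbb{R}_+^k$, $u_i({\boldsymbol\theta})=\mathbb{E}[U_i({\bf m})]$ where the $m_j$ are independent with $m_j=\lfloor\theta_j\rfloor+\mathrm{Bernoulli}(\theta_j-\lfloor\theta_j\rfloor)$. Each agent has a threshold $\mu_i$; ${\boldsymbol\theta}$ is feasible if $u_i({\boldsymbol\theta})\ge\mu_i$ for all $i$. A feasible ${\boldsymbol\theta}$ is an envy-free equilibrium if there are no $i,j$ with $\theta_j<\theta_i$ and $u_i({\boldsymbol\theta}^{(i,j)})\ge\mu_i$, where ${\boldsymbol\theta}^{(i,j)}$ is ${\boldsymbol\theta}$ with entries $i$ and $j$ swapped. *)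

theory Defs
  imports "HOL-Probability.Probability"
begin

text \<open>Agents are indexed by 0,...,k-1,
  the finite domain is a finite set D of naturals, q i x is the probability
  agent i places on point x, and mu i is the threshold of agent i.
  A strategy (vector of sample counts) is a function nat => real; only the
  entries 0..k-1 are relevant.\<close>

definition U_int :: "nat set \<Rightarrow> nat \<Rightarrow> (nat \<Rightarrow> nat \<Rightarrow> real) \<Rightarrow> nat \<Rightarrow> (nat \<Rightarrow> nat) \<Rightarrow> real" where
  "U_int D k q i m = 1 - (1/2) * (\<Sum>x\<in>D. q i x * (\<Prod>j<k. (1 - q j x) ^ (m j)))"

definition round_pmf :: "nat \<Rightarrow> (nat \<Rightarrow> real) \<Rightarrow> (nat \<Rightarrow> nat) pmf" where
  "round_pmf k \<theta> = Pi_pmf {..<k} 0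
     (\<lambda>j. map_pmf (\<lambda>b. nat \<lfloor>\<theta> j\<rfloor> + (if b then 1 else 0))
                   (bernoulli_pmf (\<theta> j - of_int \<lfloor>\<theta> j\<rfloor>)))"

definition u_real :: "nat set \<Rightarrow> nat \<Rightarrow> (nat \<Rightarrow> nat \<Rightarrow> real) \<Rightarrow> nat \<Rightarrow> (nat \<Rightarrow> real) \<Rightarrow> real" where
  "u_real D k q i \<theta> = measure_pmf.expectation (round_pmf k \<theta>) (\<lambda>m. U_int D k q i m)"

definition in_strategy_space :: "nat \<Rightarrow> (nat \<Rightarrow> real) \<Rightarrow> bool" where
  "in_strategy_space k \<theta> \<longleftrightarrow> (\<forall>j<k. 0 \<le> \<theta> j)"

definition feasible :: "nat set \<Rightarrow> nat \<Rightarrow> (nat \<Rightarrow> nat \<Rightarrow> real) \<Rightarrow> (nat \<Rightarrow> real) \<Rightarrow> (nat \<Rightarrow> real) \<Rightarrow> bool" where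
  "feasible D k q \<mu> \<theta> \<longleftrightarrow> in_strategy_space k \<theta> \<and> (\<forall>i<k. u_real D k q i \<theta> \<ge> \<mu> i)"

definition swap_entries :: "(nat \<Rightarrow> real) \<Rightarrow> nat \<Rightarrow> nat \<Rightarrow> (nat \<Rightarrow> real)" where
  "swap_entries \<theta> i j = \<theta>(i := \<theta> j, j := \<theta> i)"

definition envy_free_eq :: "nat set \<Rightarrow> nat \<Rightarrow> (nat \<Rightarrow> nat \<Rightarrow> real) \<Rightarrow> (nat \<Rightarrow> real) \<Rightarrow> (nat \<Rightarrow> real) \<Rightarrow> bool" where
  "envy_free_eq D k q \<mu> \<theta> \<longleftrightarrow> feasible D k q \<mu> \<theta> \<and>
     \<not> (\<exists>i<k. \<exists>j<k. \<theta> j < \<theta> i \<and> u_real D k q i (swap_entries \<theta> i j) \<ge> \<mu> i)"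

definition is_distribution :: "nat set \<Rightarrow> (nat \<Rightarrow> real) \<Rightarrow> bool" where
  "is_distribution D p \<longleftrightarrow> (\<forall>x\<in>D. 0 \<le> p x) \<and> sum p D = 1"

end

theory Submission
  imports Defs
begin

text \<open>Give each agent a point mass on its own domain point. Agent i is then covered as soon as
  it draws one sample of its own, so its utility is 1 - max 0 (1 - \<theta> i) / 2 and
  envy depends only on whether a swap would still leave it enough samples. With thresholds
  1/2 and 1, the profiles (0, 2) and (2, 2) are envy-free, but at their midpoint (1, 2)
  agent 1 still reaches its threshold with agent 0's single sample and therefore envies.\<close>

definition point_masses :: "nat \<Rightarrow> nat \<Rightarrow> real" where
  "point_masses i x = of_bool (i = x)"

lemma is_distribution_point_masses:
  assumes "finite D" "i \<in> D"
  shows "is_distribution D (point_masses i)"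
  using assms by (simp add: is_distribution_def point_masses_def)

lemma U_int_point_masses:
  assumes "i < k"
  shows "U_int {..<k} k point_masses i m = 1 - of_bool (m i = 0) / 2"
proof -
  have "(\<Sum>x<k. point_masses i x * (\<Prod>j<k. (1 - point_masses j x) ^ m j))
      = (\<Prod>j<k. (1 - point_masses j i) ^ m j)"
    using assms by (simp add: point_masses_def)
  also have "\<dots> = (\<Prod>j<k. if j = i then 0 ^ m i else 1)"
    by (intro prod.cong) (auto simp: point_masses_def)
  also have "\<dots> = of_bool (m i = 0)"
    using assms by simp
  finally show ?thesis
    by (simp add: U_int_def)
qed

lemma expectation_round_pmf_component:
  assumes "i < k"
  shows "measure_pmf.expectation (round_pmf k \<theta>) (\<lambda>m. f (m i))
       = frac (\<theta> i) * f (nat \<lfloor>\<theta> i\<rfloor> + 1) + (1 - frac (\<theta> i)) * f (nat \<lfloor>\<theta> i\<rfloor>)"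
    (is "_ = ?rhs")
proof -
  have "map_pmf (\<lambda>m. m i) (round_pmf k \<theta>)
      = map_pmf (\<lambda>b. nat \<lfloor>\<theta> i\<rfloor> + (if b then 1 else 0)) (bernoulli_pmf (\<theta> i - \<lfloor>\<theta> i\<rfloor>))"
    using assms by (simp add: round_pmf_def Pi_pmf_component)
  then have "measure_pmf.expectation (round_pmf k \<theta>) (\<lambda>m. f (m i))
      = measure_pmf.expectation (bernoulli_pmf (\<theta> i - \<lfloor>\<theta> i\<rfloor>)) (\<lambda>b. f (nat \<lfloor>\<theta> i\<rfloor> + (if b then 1 else 0)))"
    by (metis integral_map_pmf)
  also have "\<dots> = ?rhs"
    using frac_ge_0[of "\<theta> i"] frac_lt_1[of "\<theta> i"] by (simp add: frac_def [symmetric])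
  finally show ?thesis .
qed

lemma u_real_point_masses:
  assumes "i < k" "0 \<le> \<theta> i"
  shows "u_real {..<k} k point_masses i \<theta> = 1 - max 0 (1 - \<theta> i) / 2"
proof -
  have "u_real {..<k} k point_masses i \<theta>
      = measure_pmf.expectation (round_pmf k \<theta>) (\<lambda>m. 1 - of_bool (m i = 0) / 2)"
    using assms(1) by (simp add: u_real_def U_int_point_masses)
  also have "\<dots> = frac (\<theta> i) + (1 - frac (\<theta> i)) * (1 - of_bool (\<theta> i < 1) / 2)"
    using expectation_round_pmf_component[OF assms(1), where f = "\<lambda>n. 1 - of_bool (n = 0) / 2"]
    by simp
  also have "\<dots> = 1 - max 0 (1 - \<theta> i) / 2"
  proof (cases "\<theta> i < 1")
    case True
    with assms(2) show ?thesis
      by (simp add: frac_eq floor_eq_iff field_simps)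
  next
    case False
    then show ?thesis
      by simp
  qed
  finally show ?thesis .
qed

lemma swap_entries_apply_left [simp]: "swap_entries \<theta> i j i = \<theta> j"
  by (simp add: swap_entries_def)

lemma envy_free_eq_point_masses_iff:
  "envy_free_eq {..<k} k point_masses \<mu> \<theta> \<longleftrightarrow>
     (\<forall>i<k. 0 \<le> \<theta> i \<and> \<mu> i \<le> 1 - max 0 (1 - \<theta> i) / 2 \<and>
       (\<forall>j<k. \<theta> j < \<theta> i \<longrightarrow> 1 - max 0 (1 - \<theta> j) / 2 < \<mu> i))"
proof -
  have "u_real {..<k} k point_masses i (swap_entries \<theta> i j) = 1 - max 0 (1 - \<theta> j) / 2"
    if "i < k" "0 \<le> \<theta> j" for i j
    using that by (simp add: u_real_point_masses)
  then show ?thesis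
    unfolding envy_free_eq_def feasible_def in_strategy_space_def
    by (auto simp: u_real_point_masses not_le)
qed

theorem theorem9:
  shows "\<exists>(D::nat set) (k::nat) (q::nat \<Rightarrow> nat \<Rightarrow> real) (\<mu>::nat \<Rightarrow> real).
           finite D \<and> (\<forall>i<k. is_distribution D (q i)) \<and>
           (\<exists>\<theta>1 \<theta>2 (t::real). envy_free_eq D k q \<mu> \<theta>1 \<and> envy_free_eq D k q \<mu> \<theta>2 \<and>
              0 \<le> t \<and> t \<le> 1 \<and>
              \<not> envy_free_eq D k q \<mu> (\<lambda>j. (1 - t) * \<theta>1 j + t * \<theta>2 j))"
proof -
  define \<mu> :: "nat \<Rightarrow> real" where "\<mu> i = (if i = 0 then 1/2 else 1)" for i
  define \<theta>1 :: "nat \<Rightarrow> real" where "\<theta>1 j = (if j = 0 then 0 else 2)" for j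
  define \<theta>2 :: "nat \<Rightarrow> real" where "\<theta>2 j = 2" for j
  have less_2: "(\<forall>i<2. P i) \<longleftrightarrow> P 0 \<and> P 1" for P :: "nat \<Rightarrow> bool"
    by (auto simp: numeral_2_eq_2 less_Suc_eq)
  have "\<forall>i<2. is_distribution {..<2} (point_masses i)"
    by (simp add: is_distribution_point_masses)
  moreover have "envy_free_eq {..<2} 2 point_masses \<mu> \<theta>1"
    by (simp add: envy_free_eq_point_masses_iff less_2 \<mu>_def \<theta>1_def)
  moreover have "envy_free_eq {..<2} 2 point_masses \<mu> \<theta>2"
    by (simp add: envy_free_eq_point_masses_iff less_2 \<mu>_def \<theta>2_def)
  moreover have "\<not> envy_free_eq {..<2} 2 point_masses \<mu> (\<lambda>j. (1 - 1/2) * \<theta>1 j + 1/2 * \<theta>2 j)"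
    by (simp add: envy_free_eq_point_masses_iff less_2 \<mu>_def \<theta>1_def \<theta>2_def)
  ultimately show ?thesis
    by (intro exI[of _ "{..<2}"] exI[of _ 2] exI[of _ point_masses] exI[of _ \<mu>]
          conjI exI[of _ \<theta>1] exI[of _ \<theta>2] exI[of _ "1/2"]) auto
qed

end
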